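(* There is a constant $C_1>0$ (one may take $C_1=2^{-8}$) such that for every even integer $N\ge2$ and ${\cal R}=[0,N]^3$, we have $|\operatorname{TTw}[{\cal R}]|\le C_1N^{12}$.
   Context: Unit cubes are $[x,x+1]\times[y,y+1]\times[z,z+1]$, $(x,y,z)\in\mathbb{Z}^3$. A slab is a $2\times2\times1$ box (any orientation) of four unit cubes, and a domino is two unit cubes sharing a face. Color the cube with corner $(x,y,z)$ by $(y+z,x+z)\in(\mathbb{Z}/2)^2$. For a view axis $a\in\{x,y,z\}$, a good pair $\kappa$ for $a$ is the set of cubes on which the sum of the two coordinates perpendicular to $a$ has a fixed parity, so each axis has two complementary good pairs. Transformation (for $a=z$; other axes by permuting coordinates): delete cubes not in $\kappa$, and inflate each cube $[x,x+1]\times[y,y+1]\times[z,z+1]$ of $\kappa$ to $\tilde S\times[z,z+1]$, where $\tilde S$ has vertices $(x-\frac12,y+\frac12),(x+\frac12,y-\frac12),(x+\frac32,y+\frac12),(x+\frac12,y+\frac32)$. After rotation and rescaling this is a cubiculated region. Each slab contains two cubes of $\kappa$ and becomes the domino of their inflations, giving a domino tiling $\tilde{\mathbf t}_\kappa$. Twist of a domino tiling (floors $z\in[n,n+1]$, vertical means parallel to the $z$-axis): for an ordered pair $(d_0,d_1)$ with $d_0$ horizontal parallel to the $y$-axis and $d_1$ vertical, $d_1$ affects $d_0$ if $d_1$ has a cube on $d_0$'s floor and their interiors' projections onto the plane $x=0$ intersect. The effect is then $\pm1$, fixed by four binary parameters (side $\pm x$; which cube of $d_0$ is aligned with $d_1$;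 parity of the $x$-distance; whether the lower cube of $d_1$ is on $d_0$'s floor or below), each flipping the sign, with a fixed normalization. Otherwise the effect is $0$. $\operatorname{Tw}=\frac14\sum$ effects, and $\operatorname{Tw}_\kappa({\mathbf t})=\operatorname{Tw}(\tilde{\mathbf t}_\kappa)$. For fixed good pairs $\kappa_x,\kappa_y,\kappa_z$ for the three axes, the triple twist of a slab tiling ${\mathbf t}$ of a box is $\operatorname{TTw}({\mathbf t})=(\operatorname{Tw}_{\kappa_x}({\mathbf t}),\operatorname{Tw}_{\kappa_y}({\mathbf t}),\operatorname{Tw}_{\kappa_z}({\mathbf t}))\in\mathbb{Z}^3$. Also $\operatorname{TTw}[{\cal R}]=\{\operatorname{TTw}({\mathbf t}):{\mathbf t}$ a slab tiling of ${\cal R}\}$. *)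

theory Defs
  imports Complex_Main
begin

type_synonym cube = "int \<times> int \<times> int"
  \<comment> \<open>the unit cube [x,x+1]x[y,y+1]x[z,z+1] is represented by its corner (x,y,z)\<close>

definition box_cubes :: "int \<Rightarrow> cube set" where
  "box_cubes N = {0..<N} \<times> {0..<N} \<times> {0..<N}"

definition is_slab :: "cube set \<Rightarrow> bool" where
  "is_slab s \<longleftrightarrow> (\<exists>x y z.
      s = {(x,y,z),(x+1,y,z),(x,y+1,z),(x+1,y+1,z)} \<or>
      s = {(x,y,z),(x+1,y,z),(x,y,z+1),(x+1,y,z+1)} \<or>
      s = {(x,y,z),(x,y+1,z),(x,y,z+1),(x,y+1,z+1)})"

definition slab_tiling :: "cube set \<Rightarrow> cube set set \<Rightarrow> bool" where
  "slab_tiling R T \<longleftrightarrow> (\<forall>s\<in>T. is_slab s) \<and>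
     (\<forall>s\<in>T. \<forall>s'\<in>T. s \<noteq> s' \<longrightarrow> s \<inter> s' = {}) \<and> \<Union>T = R"

text \<open>Effect of a vertical domino with lower cube b on a horizontal domino parallel
  to the y-axis with first (smaller y) cube a.\<close>
definition effect :: "cube \<Rightarrow> cube \<Rightarrow> real" where
  "effect a b = (case a of (x,y,z) \<Rightarrow> case b of (x',y',z') \<Rightarrow>
     if (y' = y \<or> y' = y + 1) \<and> (z' = z \<or> z' = z - 1) then
        (if x' < x then -1 else 1) * (if y' = y + 1 then -1 else 1)
        * (if odd (x' - x) then 1 else -1) * (if z' = z - 1 then -1 else 1)
     else 0)"

definition twist :: "cube set set \<Rightarrow> real" where
  "twist D = (1/4) * (\<Sum>(a,b) \<in> {(a,b). (case a of (x,y,z) \<Rightarrow> {(x,y,z),(x,y+1,z)} \<in> D) \<and>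
                                    (case b of (x,y,z) \<Rightarrow> {(x,y,z),(x,y,z+1)} \<in> D)}.
                     effect a b)"

text \<open>Axes: 0 = x, 1 = y, 2 = z. The coordinate permutation moving the view axis to the
  third position (cyclic, i.e. a rotation).\<close>
definition axis_perm :: "nat \<Rightarrow> cube \<Rightarrow> cube" where
  "axis_perm a c = (case c of (x,y,z) \<Rightarrow>
     if a = 0 then (y,z,x) else if a = 1 then (z,x,y) else (x,y,z))"

definition kappa_z :: "int \<Rightarrow> cube set" where
  "kappa_z p = {(x,y,z). (x + y) mod 2 = p}"

text \<open>Inflation followed by rotation by 45 degrees and rescaling: the tilted square with
  centre (x+1/2,y+1/2) becomes the unit square with corner ((x-y-p)/2,(x+y-p)/2).\<close>
definition inflate_z :: "int \<Rightarrow> cube \<Rightarrow> cube" where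
  "inflate_z p c = (case c of (x,y,z) \<Rightarrow> ((x - y - p) div 2, (x + y - p) div 2, z))"

definition transform :: "nat \<Rightarrow> int \<Rightarrow> cube set set \<Rightarrow> cube set set" where
  "transform a p T = (\<lambda>s. inflate_z p ` (axis_perm a ` s \<inter> kappa_z p)) ` T"

definition Tw_kappa :: "nat \<Rightarrow> int \<Rightarrow> cube set set \<Rightarrow> real" where
  "Tw_kappa a p T = twist (transform a p T)"

definition TTw :: "int \<Rightarrow> int \<Rightarrow> int \<Rightarrow> cube set set \<Rightarrow> real \<times> real \<times> real" where
  "TTw px py pz T = (Tw_kappa 0 px T, Tw_kappa 1 py T, Tw_kappa 2 pz T)"

definition TTw_set :: "int \<Rightarrow> int \<Rightarrow> int \<Rightarrow> cube set \<Rightarrow> (real \<times> real \<times> real) set" where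
  "TTw_set px py pz R = {TTw px py pz T | T. slab_tiling R T}"

end

theory Submission
  imports Defs
begin

(* After the transformation, a slab tiling of [0,N]^3 becomes a domino tiling D of a tilted
   prism R (the inflated box), all of whose x-lines have at most N cubes, of odd length if
   p = 0 and of even length if p = 1.  Only pairs of a y-domino and a vertical domino that
   affect each other contribute to the twist, each by 1 or -1, and such pairs correspond
   bijectively to pairs (c, c') of a cube c of a y-domino and a cube c' of a vertical domino
   lying in the same x-line.  A line with h such cubes c and v such cubes c' carries
   hv <= N (h + v) / 4 of these pairs, so there are at most N |R| / 4 <= N^4 / 8 of them, and
   counting parities along the lines shows that their number is even.  Hence 4 Tw is an even
   integer of absolute value at most N^4 / 8, i.e. Tw is one of N^4 / 8 + 1 half-integers,
   and (N^4 / 8 + 1)^3 <= N^12 / 2^8 for N >= 4.  For N = 2 the prism is too thin to contain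
   any affecting pair, so TTw = 0. *)

fun domino_x :: "cube \<Rightarrow> cube set" where
  "domino_x (x,y,z) = {(x,y,z),(x+1,y,z)}"

fun domino_y :: "cube \<Rightarrow> cube set" where
  "domino_y (x,y,z) = {(x,y,z),(x,y+1,z)}"

fun domino_z :: "cube \<Rightarrow> cube set" where
  "domino_z (x,y,z) = {(x,y,z),(x,y,z+1)}"

definition is_domino :: "cube set \<Rightarrow> bool" where
  "is_domino d \<longleftrightarrow> d \<in> range domino_x \<union> range domino_y \<union> range domino_z"

lemma domino_ranges_disjoint:
  "range domino_x \<inter> range domino_y = {}"
  "range domino_x \<inter> range domino_z = {}"
  "range domino_y \<inter> range domino_z = {}"
  by (auto simp: doubleton_eq_iff)

lemma inj_dominoes: "inj domino_x" "inj domino_y" "inj domino_z"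
  by (auto simp: inj_def doubleton_eq_iff)

lemma card_domino: "is_domino d \<Longrightarrow> card d = 2"
  by (auto simp: is_domino_def)

locale domino_tiling =
  fixes R :: "cube set" and D :: "cube set set"
  assumes finite_region: "finite R"
    and dominoes: "d \<in> D \<Longrightarrow> is_domino d"
    and disjoint_dominoes: "pairwise disjnt D"
    and Union_dominoes: "\<Union>D = R"
begin

lemma finite_dominoes: "finite D"
  using finite_region Union_dominoes finite_UnionD by blast

lemma domino_eqI: "d \<in> D \<Longrightarrow> d' \<in> D \<Longrightarrow> c \<in> d \<Longrightarrow> c \<in> d' \<Longrightarrow> d = d'"
  using disjoint_dominoes unfolding pairwise_def disjnt_def by blast

lemma card_Union_dominoes:
  assumes "D' \<subseteq> D" shows "card (\<Union>D') = 2 * card D'"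
proof -
  have "card (\<Union>D') = sum card D'"
    using assms disjoint_dominoes dominoes card_domino
    by (intro card_Union_disjoint) (auto simp: pairwise_subset card_ge_0_finite)
  also have "\<dots> = 2 * card D'"
    using assms dominoes card_domino by (simp add: subset_iff)
  finally show ?thesis .
qed

end

section \<open>From slab tilings to domino tilings\<close>

lemma is_slabI:
  "s = {(x,y,z),(x+1,y,z),(x,y+1,z),(x+1,y+1,z)} \<Longrightarrow> is_slab s"
  "s = {(x,y,z),(x+1,y,z),(x,y,z+1),(x+1,y,z+1)} \<Longrightarrow> is_slab s"
  "s = {(x,y,z),(x,y+1,z),(x,y,z+1),(x,y+1,z+1)} \<Longrightarrow> is_slab s"
  unfolding is_slab_def by blast+

lemma is_slab_axis_perm:
  assumes "is_slab s" shows "is_slab (axis_perm a ` s)"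
proof -
  obtain x y z where s: "s = {(x,y,z),(x+1,y,z),(x,y+1,z),(x+1,y+1,z)} \<or>
      s = {(x,y,z),(x+1,y,z),(x,y,z+1),(x+1,y,z+1)} \<or>
      s = {(x,y,z),(x,y+1,z),(x,y,z+1),(x,y+1,z+1)}"
    using assms unfolding is_slab_def by blast
  consider "a = 0" | "a = 1" | "a \<noteq> 0 \<and> a \<noteq> 1" by blast
  then show ?thesis
  proof cases
    case 1
    then show ?thesis using s
      apply (elim disjE)
        apply (rule is_slabI(2)[of _ y z x], auto simp: axis_perm_def)
       apply (rule is_slabI(3)[of _ y z x], auto simp: axis_perm_def)
      apply (rule is_slabI(1)[of _ y z x], auto simp: axis_perm_def)
      done
  next
    case 2
    then show ?thesis using s
      apply (elim disjE)
        apply (rule is_slabI(3)[of _ z x y], auto simp: axis_perm_def)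
       apply (rule is_slabI(1)[of _ z x y], auto simp: axis_perm_def)
      apply (rule is_slabI(2)[of _ z x y], auto simp: axis_perm_def)
      done
  next
    case 3
    then show ?thesis using s
      by (elim disjE) (rule is_slabI[of _ x y z], auto simp: axis_perm_def)+
  qed
qed

lemma inj_axis_perm: "inj (axis_perm a)"
  unfolding inj_def axis_perm_def by auto

lemma is_domino_inflate_z_pairs:
  "is_domino (inflate_z p ` {(x,y,z),(x+1,y+1,z)})"
  "is_domino (inflate_z p ` {(x,y+1,z),(x+1,y,z)})"
  "is_domino (inflate_z p ` {(x,y,z),(x,y,z+1)})"
proof -
  have "(x + 1 + (y + 1) - p) div 2 = (x + y - p) div 2 + 1"
    and "(x + 1 - y - p) div 2 = (x - (y + 1) - p) div 2 + 1" by presburger+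
  then have "inflate_z p ` {(x,y,z),(x+1,y+1,z)} = domino_y (inflate_z p (x,y,z))"
    and "inflate_z p ` {(x,y+1,z),(x+1,y,z)} = domino_x (inflate_z p (x,y+1,z))"
    and "inflate_z p ` {(x,y,z),(x,y,z+1)} = domino_z (inflate_z p (x,y,z))"
    by (auto simp: inflate_z_def algebra_simps)
  then show "is_domino (inflate_z p ` {(x,y,z),(x+1,y+1,z)})"
    "is_domino (inflate_z p ` {(x,y+1,z),(x+1,y,z)})"
    "is_domino (inflate_z p ` {(x,y,z),(x,y,z+1)})"
    unfolding is_domino_def by auto
qed

text \<open>A slab meets the good pair in two diagonal neighbours if it is horizontal and in two
  vertical neighbours otherwise.\<close>
lemma is_domino_inflate_slab:
  assumes "is_slab s" and p: "p \<in> {0,1}"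
  shows "is_domino (inflate_z p ` (s \<inter> kappa_z p))"
proof -
  obtain x y z where s: "s = {(x,y,z),(x+1,y,z),(x,y+1,z),(x+1,y+1,z)} \<or>
      s = {(x,y,z),(x+1,y,z),(x,y,z+1),(x+1,y,z+1)} \<or>
      s = {(x,y,z),(x,y+1,z),(x,y,z+1),(x,y+1,z+1)}"
    using assms unfolding is_slab_def by blast
  show ?thesis
  proof (cases "(x + y) mod 2 = p")
    case True
    then have "{(x,y,z),(x+1,y,z),(x,y+1,z),(x+1,y+1,z)} \<inter> kappa_z p = {(x,y,z),(x+1,y+1,z)}"
      "{(x,y,z),(x+1,y,z),(x,y,z+1),(x+1,y,z+1)} \<inter> kappa_z p = {(x,y,z),(x,y,z+1)}"
      "{(x,y,z),(x,y+1,z),(x,y,z+1),(x,y+1,z+1)} \<inter> kappa_z p = {(x,y,z),(x,y,z+1)}"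
      using p by (auto simp: kappa_z_def; presburger)+
    with s show ?thesis using is_domino_inflate_z_pairs by metis
  next
    case False
    then have "{(x,y,z),(x+1,y,z),(x,y+1,z),(x+1,y+1,z)} \<inter> kappa_z p = {(x,y+1,z),(x+1,y,z)}"
      "{(x,y,z),(x+1,y,z),(x,y,z+1),(x+1,y,z+1)} \<inter> kappa_z p = {(x+1,y,z),(x+1,y,z+1)}"
      "{(x,y,z),(x,y+1,z),(x,y,z+1),(x,y+1,z+1)} \<inter> kappa_z p = {(x,y+1,z),(x,y+1,z+1)}"
      using p by (auto simp: kappa_z_def; presburger)+
    with s show ?thesis using is_domino_inflate_z_pairs by metis
  qed
qed

lemma inflate_z_eq_iff:
  "c \<in> kappa_z p \<Longrightarrow> inflate_z p c = (u,v,w) \<longleftrightarrow> c = (u + v + p, v - u, w)"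
  by (cases c) (auto simp: kappa_z_def inflate_z_def; presburger)

lemma inj_on_inflate_z: "inj_on (inflate_z p) (kappa_z p)"
proof (rule inj_onI)
  fix c c' assume c: "c \<in> kappa_z p" and c': "c' \<in> kappa_z p"
    and eq: "inflate_z p c = inflate_z p c'"
  obtain u v w where uvw: "inflate_z p c = (u,v,w)" by (metis prod_cases3)
  then have "c = (u + v + p, v - u, w)" using inflate_z_eq_iff[OF c] by blast
  moreover from uvw eq have "c' = (u + v + p, v - u, w)" using inflate_z_eq_iff[OF c'] by simp
  ultimately show "c = c'" by simp
qed

lemma domino_tiling_transform:
  assumes T: "slab_tiling R T" and "finite R" and p: "p \<in> {0,1}"
  shows "domino_tiling (inflate_z p ` (axis_perm a ` R \<inter> kappa_z p)) (transform a p T)"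
proof
  let ?F = "\<lambda>s. inflate_z p ` (axis_perm a ` s \<inter> kappa_z p)"
  have transform: "transform a p T = ?F ` T" unfolding transform_def ..
  have F_Int: "?F s \<inter> ?F s' = ?F (s \<inter> s')" for s s'
  proof -
    have "axis_perm a ` (s \<inter> s') \<inter> kappa_z p
        = (axis_perm a ` s \<inter> kappa_z p) \<inter> (axis_perm a ` s' \<inter> kappa_z p)"
      using image_Int[OF inj_axis_perm] by auto
    then show ?thesis by (simp add: inj_on_image_Int[OF inj_on_inflate_z Int_lower2 Int_lower2])
  qed
  show "finite (?F R)" using \<open>finite R\<close> by simp
  show "is_domino d" if "d \<in> transform a p T" for d
    using that T is_slab_axis_perm is_domino_inflate_slab[OF _ p]
    unfolding transform slab_tiling_def by auto
  show "pairwise disjnt (transform a p T)"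
    unfolding transform
  proof (rule pairwise_imageI)
    fix s s' assume "s \<in> T" "s' \<in> T" "s \<noteq> s'"
    then have "s \<inter> s' = {}" using T unfolding slab_tiling_def by blast
    then show "disjnt (?F s) (?F s')" by (simp add: disjnt_def F_Int)
  qed
  have "\<Union>(?F ` T) = ?F (\<Union>T)" by auto
  then show "\<Union>(transform a p T) = ?F R"
    using T unfolding transform slab_tiling_def by simp
qed

section \<open>The twist counts affecting pairs with signs\<close>

fun affected_by :: "cube \<Rightarrow> cube \<Rightarrow> bool" where
  "affected_by (x,y,z) (x',y',z') \<longleftrightarrow> (y' = y \<or> y' = y + 1) \<and> (z' = z \<or> z' = z - 1)"

definition affecting_pairs :: "cube set set \<Rightarrow> (cube \<times> cube) set" where
  "affecting_pairs D = {(a,b). domino_y a \<in> D \<and> domino_z b \<in> D \<and> affected_by a b}"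

lemma effect_eq_0: "\<not> affected_by a b \<Longrightarrow> effect a b = 0"
  by (cases a, cases b) (auto simp: effect_def)

lemma effect_sign: "affected_by a b \<Longrightarrow> effect a b \<in> {1, -1}"
  by (cases a, cases b) (auto simp: effect_def)

lemma sum_of_signs:
  fixes g :: "'a \<Rightarrow> 'b::ring_1"
  assumes "finite A" and "\<And>x. x \<in> A \<Longrightarrow> g x \<in> {1, -1}"
  shows "\<exists>k. sum g A = of_int k \<and> \<bar>k\<bar> \<le> int (card A) \<and> even (k + int (card A))"
  using assms
proof (induction A rule: finite_induct)
  case empty
  show ?case by simp
next
  case (insert x A)
  then obtain k where k: "sum g A = of_int k" "\<bar>k\<bar> \<le> int (card A)" "even (k + int (card A))"
    by blast
  from insert.prems have "g x = 1 \<or> g x = -1" by blast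
  then show ?case
  proof
    assume "g x = 1"
    then show ?thesis using insert k by (intro exI[of _ "k + 1"]) auto
  next
    assume "g x = -1"
    then show ?thesis using insert k by (intro exI[of _ "k - 1"]) auto
  qed
qed

context domino_tiling
begin

lemma finite_domino_pairs: "finite (domino_y -` D \<times> domino_z -` D)"
  using finite_dominoes inj_dominoes by (simp add: finite_vimageI)

lemma finite_affecting_pairs: "finite (affecting_pairs D)"
  by (rule finite_subset[OF _ finite_domino_pairs]) (auto simp: affecting_pairs_def)

lemma twist_eq_sum_affecting_pairs:
  "twist D = 1/4 * (\<Sum>(a,b)\<in>affecting_pairs D. effect a b)"
proof -
  let ?P = "{(a,b). domino_y a \<in> D \<and> domino_z b \<in> D}"
  have P: "?P = domino_y -` D \<times> domino_z -` D" by auto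
  have "(\<Sum>(a,b)\<in>?P. effect a b) = (\<Sum>(a,b)\<in>affecting_pairs D. effect a b)"
  proof (rule sum.mono_neutral_right)
    show "finite ?P" using finite_domino_pairs by (simp only: P)
    show "affecting_pairs D \<subseteq> ?P" by (auto simp: affecting_pairs_def)
    show "\<forall>i\<in>?P - affecting_pairs D. (case i of (a,b) \<Rightarrow> effect a b) = 0"
      by (clarsimp simp: affecting_pairs_def simp del: affected_by.simps) (metis effect_eq_0)
  qed
  moreover have "twist D = 1/4 * (\<Sum>(a,b)\<in>?P. effect a b)"
    unfolding twist_def by (intro arg_cong2[where f = "(*)"] sum.cong) auto
  ultimately show ?thesis by simp
qed

lemma twist_eq_quarter_int:
  obtains k :: int where "twist D = of_int k / 4" and "\<bar>k\<bar> \<le> int (card (affecting_pairs D))"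
    and "even (k + int (card (affecting_pairs D)))"
proof -
  have "effect a b \<in> {1, -1}" if "(a,b) \<in> affecting_pairs D" for a b
    using that effect_sign by (simp add: affecting_pairs_def)
  then obtain k where "(\<Sum>(a,b)\<in>affecting_pairs D. effect a b) = of_int k"
    and "\<bar>k\<bar> \<le> int (card (affecting_pairs D))" and "even (k + int (card (affecting_pairs D)))"
    using sum_of_signs[OF finite_affecting_pairs, of "case_prod effect"] by auto
  with that show ?thesis by (simp add: twist_eq_sum_affecting_pairs)
qed

end

section \<open>Affecting pairs are counted along x-lines\<close>

definition covered_by :: "cube set set \<Rightarrow> (cube \<Rightarrow> cube set) \<Rightarrow> cube set" where
  "covered_by D f = \<Union>(D \<inter> range f)"

definition x_line :: "cube set \<Rightarrow> int \<times> int \<Rightarrow> cube set" where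
  "x_line S r = {c \<in> S. snd c = r}"

definition aligned_pairs :: "cube set set \<Rightarrow> (cube \<times> cube) set" where
  "aligned_pairs D =
     {(c,c'). c \<in> covered_by D domino_y \<and> c' \<in> covered_by D domino_z \<and> snd c = snd c'}"

text \<open>The cube of the y-domino a and the cube of the vertical domino b on the floor of a that
  project to the same point of the plane x = 0.\<close>
fun aligned_cubes :: "cube \<times> cube \<Rightarrow> cube \<times> cube" where
  "aligned_cubes ((x,y,z),(x',y',z')) = ((x,y',z),(x',y',z))"

lemma covered_by_iff: "c \<in> covered_by D f \<longleftrightarrow> (\<exists>a. f a \<in> D \<and> c \<in> f a)"
  by (auto simp: covered_by_def)

lemma aligned_cubes_mem:
  assumes "affected_by a b" and "aligned_cubes (a,b) = (c,c')"
  shows "c \<in> domino_y a" and "c' \<in> domino_z b" and "snd c = snd c'"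
  using assms by (cases a, cases b, auto)+

lemma aligned_cubes_eqI:
  assumes "c \<in> domino_y a" and "c' \<in> domino_z b" and "snd c = snd c'"
  shows "affected_by a b" and "aligned_cubes (a,b) = (c,c')"
  using assms by (cases a, cases b, auto)+

lemma card_eq_sum_x_lines:
  assumes "finite R" and "S \<subseteq> R"
  shows "card S = (\<Sum>r\<in>snd ` R. card (x_line S r))"
proof -
  have "finite S" using assms finite_subset by blast
  then have "card (\<Union>r\<in>snd ` R. x_line S r) = (\<Sum>r\<in>snd ` R. card (x_line S r))"
    using assms(1) by (intro card_UN_disjoint) (auto simp: x_line_def)
  moreover have "(\<Union>r\<in>snd ` R. x_line S r) = S" using assms(2) by (auto simp: x_line_def)
  ultimately show ?thesis by simp
qed

lemma four_mult_le_mult_add: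
  fixes h v n :: nat
  assumes "h + v \<le> n"
  shows "4 * (h * v) \<le> n * (h + v)"
proof -
  have "int (4 * (h * v)) \<le> int ((h + v) * (h + v))"
    using zero_le_power2[of "int h - int v"] by (simp add: power2_eq_square algebra_simps)
  then have "4 * (h * v) \<le> (h + v) * (h + v)" by linarith
  also have "\<dots> \<le> n * (h + v)" using assms by simp
  finally show ?thesis .
qed

context domino_tiling
begin

lemma bij_betw_aligned_cubes: "bij_betw aligned_cubes (affecting_pairs D) (aligned_pairs D)"
proof (rule bij_betw_imageI)
  show "inj_on aligned_cubes (affecting_pairs D)"
  proof (rule inj_onI, clarify)
    fix a b a' b'
    assume "(a,b) \<in> affecting_pairs D" and "(a',b') \<in> affecting_pairs D"
      and eq: "aligned_cubes (a,b) = aligned_cubes (a',b')"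
    then have ab: "domino_y a \<in> D" "domino_z b \<in> D" "affected_by a b"
      and ab': "domino_y a' \<in> D" "domino_z b' \<in> D" "affected_by a' b'"
      by (simp_all add: affecting_pairs_def)
    obtain c c' where cc: "aligned_cubes (a,b) = (c,c')" by (metis prod.exhaust)
    note mem = aligned_cubes_mem[OF ab(3) cc] aligned_cubes_mem[OF ab'(3) cc[unfolded eq]]
    have "domino_y a = domino_y a'" using domino_eqI ab(1) ab'(1) mem by blast
    moreover have "domino_z b = domino_z b'" using domino_eqI ab(2) ab'(2) mem by blast
    ultimately show "a = a' \<and> b = b'" using inj_dominoes by (simp add: inj_eq)
  qed
  show "aligned_cubes ` affecting_pairs D = aligned_pairs D"
  proof (intro equalityI subsetI)
    fix q assume "q \<in> aligned_cubes ` affecting_pairs D"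
    then obtain a b where ab: "(a,b) \<in> affecting_pairs D" and q: "q = aligned_cubes (a,b)"
      by auto
    obtain c c' where cc: "aligned_cubes (a,b) = (c,c')" by (metis prod.exhaust)
    from ab have "domino_y a \<in> D" "domino_z b \<in> D" "affected_by a b"
      by (simp_all add: affecting_pairs_def)
    with aligned_cubes_mem[OF _ cc]
    have "c \<in> covered_by D domino_y" "c' \<in> covered_by D domino_z" "snd c = snd c'"
      unfolding covered_by_iff by blast+
    then show "q \<in> aligned_pairs D" unfolding q cc aligned_pairs_def by simp
  next
    fix q assume "q \<in> aligned_pairs D"
    then obtain c c' where q: "q = (c,c')" and "snd c = snd c'"
      and "c \<in> covered_by D domino_y" "c' \<in> covered_by D domino_z"
      by (auto simp: aligned_pairs_def)
    then obtain a b where "domino_y a \<in> D" "c \<in> domino_y a" "domino_z b \<in> D" "c' \<in> domino_z b"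
      unfolding covered_by_iff by blast
    with \<open>snd c = snd c'\<close> have "(a,b) \<in> affecting_pairs D" "aligned_cubes (a,b) = q"
      using aligned_cubes_eqI[of c a c' b] unfolding q affecting_pairs_def by simp_all
    then show "q \<in> aligned_cubes ` affecting_pairs D" by (metis image_eqI)
  qed
qed

lemma card_affecting_pairs: "card (affecting_pairs D) = card (aligned_pairs D)"
  using bij_betw_aligned_cubes by (rule bij_betw_same_card)

lemma twist_eq_0_if_no_aligned_pairs:
  assumes "aligned_pairs D = {}"
  shows "twist D = 0"
proof -
  obtain k where "twist D = of_int k / 4" and "\<bar>k\<bar> \<le> int (card (affecting_pairs D))"
    by (rule twist_eq_quarter_int)
  with assms show ?thesis by (simp add: card_affecting_pairs)
qed

lemma covered_by_subset: "covered_by D f \<subseteq> R"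
  using Union_dominoes by (auto simp: covered_by_def)

lemma covered_by_disjoint:
  assumes "range f \<inter> range g = {}"
  shows "covered_by D f \<inter> covered_by D g = {}"
proof -
  have False if "f a \<in> D" "c \<in> f a" "g b \<in> D" "c \<in> g b" for a b c
    using domino_eqI[OF that(1,3,2,4)] assms by blast
  then show ?thesis by (auto simp: covered_by_iff)
qed

lemma region_eq_covered_by:
  "R = covered_by D domino_x \<union> covered_by D domino_y \<union> covered_by D domino_z"
proof -
  have "D = (D \<inter> range domino_x) \<union> (D \<inter> range domino_y) \<union> (D \<inter> range domino_z)"
    using dominoes unfolding is_domino_def by blast
  then show ?thesis
    unfolding covered_by_def Union_dominoes[symmetric] by (metis Union_Un_distrib)
qed

lemma even_card_covered_by: "even (card (covered_by D f))"
  using card_Union_dominoes[of "D \<inter> range f"] by (simp add: covered_by_def)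

lemma card_covered_by_eq_sum:
  "card (covered_by D f) = (\<Sum>r\<in>snd ` R. card (x_line (covered_by D f) r))"
  using finite_region covered_by_subset by (rule card_eq_sum_x_lines)

lemma finite_x_line_covered_by: "finite (x_line (covered_by D f) r)"
  using finite_region covered_by_subset by (auto simp: x_line_def intro: finite_subset)

lemma x_line_covered_by_x:
  "x_line (covered_by D domino_x) r = \<Union>(D \<inter> domino_x ` {c. snd c = r})"
proof -
  have snd_eq: "snd c = snd a" if "c \<in> domino_x a" for c a using that by (cases a) auto
  show ?thesis
  proof (intro equalityI subsetI)
    fix c assume "c \<in> x_line (covered_by D domino_x) r"
    then obtain a where "domino_x a \<in> D" "c \<in> domino_x a" "snd c = r"
      unfolding x_line_def covered_by_iff by blast
    moreover from this have "domino_x a \<in> domino_x ` {c. snd c = r}"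
      using snd_eq by (intro imageI) simp
    ultimately show "c \<in> \<Union>(D \<inter> domino_x ` {c. snd c = r})" by blast
  next
    fix c assume "c \<in> \<Union>(D \<inter> domino_x ` {c. snd c = r})"
    then obtain a where "domino_x a \<in> D" "c \<in> domino_x a" "snd a = r" by blast
    then have "c \<in> covered_by D domino_x" and "snd c = r"
      using snd_eq unfolding covered_by_iff by blast+
    then show "c \<in> x_line (covered_by D domino_x) r" by (simp add: x_line_def)
  qed
qed

lemma even_card_x_line_covered_by_x: "even (card (x_line (covered_by D domino_x) r))"
  using card_Union_dominoes[of "D \<inter> domino_x ` {c. snd c = r}"]
  by (simp add: x_line_covered_by_x)

lemma card_x_line_split:
  "card (x_line R r) = card (x_line (covered_by D domino_x) r)
     + card (x_line (covered_by D domino_y) r) + card (x_line (covered_by D domino_z) r)"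
proof -
  have disj: "x_line (covered_by D f) r \<inter> x_line (covered_by D g) r = {}"
    if "range f \<inter> range g = {}" for f g
    using covered_by_disjoint[OF that] by (auto simp: x_line_def)
  have "x_line R r = x_line (covered_by D domino_x) r \<union> x_line (covered_by D domino_y) r
      \<union> x_line (covered_by D domino_z) r"
    by (subst region_eq_covered_by) (auto simp: x_line_def)
  also have "card \<dots> = card (x_line (covered_by D domino_x) r)
     + card (x_line (covered_by D domino_y) r) + card (x_line (covered_by D domino_z) r)"
    using disj domino_ranges_disjoint finite_x_line_covered_by
    by (simp add: card_Un_disjoint Int_Un_distrib2)
  finally show ?thesis .
qed

lemma card_aligned_pairs:
  "card (aligned_pairs D) = (\<Sum>r\<in>snd ` R.
     card (x_line (covered_by D domino_y) r) * card (x_line (covered_by D domino_z) r))"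
proof -
  have "aligned_pairs D
      = (\<Union>r\<in>snd ` R. x_line (covered_by D domino_y) r \<times> x_line (covered_by D domino_z) r)"
    using covered_by_subset by (fastforce simp: aligned_pairs_def x_line_def)
  moreover have
    "card (\<Union>r\<in>snd ` R. x_line (covered_by D domino_y) r \<times> x_line (covered_by D domino_z) r)
      = (\<Sum>r\<in>snd ` R. card (x_line (covered_by D domino_y) r \<times> x_line (covered_by D domino_z) r))"
    using finite_region finite_x_line_covered_by
    by (intro card_UN_disjoint) (auto simp: x_line_def)
  ultimately show ?thesis by (simp add: card_cartesian_product)
qed

lemma four_card_aligned_pairs_le:
  assumes "\<And>r. card (x_line R r) \<le> n"
  shows "4 * card (aligned_pairs D) \<le> n * card R"
proof -
  define h where "h r = card (x_line (covered_by D domino_y) r)" for r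
  define v where "v r = card (x_line (covered_by D domino_z) r)" for r
  have hv: "h r + v r \<le> n" for r
    using card_x_line_split[of r] assms[of r] unfolding h_def v_def by linarith
  have "4 * card (aligned_pairs D) = (\<Sum>r\<in>snd ` R. 4 * (h r * v r))"
    by (simp add: card_aligned_pairs h_def v_def sum_distrib_left)
  also have "\<dots> \<le> (\<Sum>r\<in>snd ` R. n * (h r + v r))"
    using hv by (intro sum_mono four_mult_le_mult_add)
  also have "\<dots> = n * (card (covered_by D domino_y) + card (covered_by D domino_z))"
    by (simp add: card_covered_by_eq_sum h_def v_def sum.distrib flip: sum_distrib_left)
  also have "\<dots> \<le> n * card R"
  proof -
    have "card (covered_by D domino_y) + card (covered_by D domino_z)
        = card (covered_by D domino_y \<union> covered_by D domino_z)"
      using finite_region covered_by_subset covered_by_disjoint[OF domino_ranges_disjoint(3)]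
      by (intro card_Un_disjoint[symmetric]) (auto intro: finite_subset)
    also have "\<dots> \<le> card R" using finite_region covered_by_subset by (intro card_mono) auto
    finally show ?thesis by simp
  qed
  finally show ?thesis .
qed

text \<open>The cubes of x-dominoes come in pairs within each x-line, so h + v has the parity of
  the line length.  If all lengths are odd, every product h v is even; if all are even,
  h v has the parity of h, and the h add up to the even number of cubes of y-dominoes.\<close>
lemma even_card_aligned_pairs:
  assumes "\<And>r. r \<in> snd ` R \<Longrightarrow> even (card (x_line R r)) = e"
  shows "even (card (aligned_pairs D))"
proof -
  define h where "h r = card (x_line (covered_by D domino_y) r)" for r
  define v where "v r = card (x_line (covered_by D domino_z) r)" for r
  have "even (h r * v r + (if e then h r else 0))" if "r \<in> snd ` R" for r
  proof -
    have "even (h r + v r) = e"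
      using assms[OF that] card_x_line_split[of r] even_card_x_line_covered_by_x[of r]
      unfolding h_def v_def by simp
    then show ?thesis by (cases e) auto
  qed
  then have "even (\<Sum>r\<in>snd ` R. h r * v r + (if e then h r else 0))" by (simp add: dvd_sum)
  moreover have "(\<Sum>r\<in>snd ` R. h r * v r + (if e then h r else 0))
      = card (aligned_pairs D) + (if e then card (covered_by D domino_y) else 0)"
    by (simp add: sum.distrib card_aligned_pairs card_covered_by_eq_sum h_def v_def)
  ultimately show ?thesis using even_card_covered_by[of domino_y] by (cases e) auto
qed

lemma aligned_pairs_empty_if_x_lines_le_1:
  assumes "\<And>r. card (x_line R r) \<le> 1"
  shows "aligned_pairs D = {}"
proof -
  have products_0:
    "card (x_line (covered_by D domino_y) r) * card (x_line (covered_by D domino_z) r) = 0" for r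
    using card_x_line_split[of r] assms[of r] by (simp, linarith)
  have "card (aligned_pairs D) = 0"
    by (simp only: card_aligned_pairs products_0 sum.neutral_const)
  moreover have "finite (aligned_pairs D)"
    using finite_affecting_pairs bij_betw_aligned_cubes bij_betw_finite by blast
  ultimately show ?thesis by simp
qed

lemma aligned_pairs_empty_if_no_y_neighbours:
  assumes "\<And>x y z. (x,y,z) \<in> R \<Longrightarrow> (x,y+1,z) \<notin> R"
  shows "aligned_pairs D = {}"
proof -
  have "domino_y a \<notin> D" for a
    using assms Union_dominoes by (cases a) auto
  then show ?thesis by (simp add: aligned_pairs_def covered_by_iff)
qed

end

section \<open>The inflated box\<close>

definition inflated_box :: "int \<Rightarrow> int \<Rightarrow> cube set" where
  "inflated_box N p =
     {(u,v,w). 0 \<le> u + v + p \<and> u + v + p < N \<and> 0 \<le> v - u \<and> v - u < N \<and> 0 \<le> w \<and> w < N}"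

lemma finite_box_cubes: "finite (box_cubes N)"
  by (simp add: box_cubes_def)

lemma inflate_z_box:
  assumes p: "p \<in> {0,1}"
  shows "inflate_z p ` (box_cubes N \<inter> kappa_z p) = inflated_box N p"
proof (intro equalityI subsetI)
  fix c' assume "c' \<in> inflate_z p ` (box_cubes N \<inter> kappa_z p)"
  then obtain c where c: "c \<in> box_cubes N" "c \<in> kappa_z p" and c': "c' = inflate_z p c"
    by blast
  obtain u v w where uvw: "c' = (u,v,w)" by (metis prod_cases3)
  with c' have "inflate_z p c = (u,v,w)" by simp
  then have "c = (u + v + p, v - u, w)" using inflate_z_eq_iff[OF c(2)] by blast
  with c(1) show "c' \<in> inflated_box N p"
    by (simp add: uvw box_cubes_def inflated_box_def)
next
  fix c' assume c': "c' \<in> inflated_box N p"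
  then obtain u v w where uvw: "c' = (u,v,w)" by (metis prod_cases3)
  have "(u + v + p, v - u, w) \<in> kappa_z p"
    using p by (auto simp: kappa_z_def)
  moreover from this have "inflate_z p (u + v + p, v - u, w) = c'"
    by (simp add: inflate_z_eq_iff uvw)
  moreover have "(u + v + p, v - u, w) \<in> box_cubes N"
    using c' by (simp add: uvw inflated_box_def box_cubes_def)
  ultimately show "c' \<in> inflate_z p ` (box_cubes N \<inter> kappa_z p)" by (metis IntI image_eqI)
qed

lemma finite_inflated_box: "p \<in> {0,1} \<Longrightarrow> finite (inflated_box N p)"
  using finite_box_cubes inflate_z_box by (metis finite_Int finite_imageI)

lemma axis_perm_box: "axis_perm a ` box_cubes N = box_cubes N"
proof (rule endo_inj_surj)
  show "finite (box_cubes N)" by (rule finite_box_cubes)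
  show "axis_perm a ` box_cubes N \<subseteq> box_cubes N"
    by (auto simp: axis_perm_def box_cubes_def split: if_splits)
  show "inj_on (axis_perm a) (box_cubes N)"
    using inj_axis_perm by (rule inj_on_subset) simp
qed

lemma domino_tiling_inflated_box:
  assumes "slab_tiling (box_cubes N) T" and "p \<in> {0,1}"
  shows "domino_tiling (inflated_box N p) (transform a p T)"
  using domino_tiling_transform[OF assms(1) finite_box_cubes assms(2), of a]
  by (simp only: axis_perm_box inflate_z_box[OF assms(2)])

lemma card_box_Int_kappa_z:
  assumes "even N"
  shows "2 * card (box_cubes N \<inter> kappa_z p) \<le> card (box_cubes N)"
proof -
  define f :: "int \<Rightarrow> int" where "f x = x + 1 - 2 * (x mod 2)" for x
  have f_f: "f (f x) = x" and f_parity: "(f x + y) mod 2 \<noteq> (x + y) mod 2" for x y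
    unfolding f_def by presburger+
  have f_range: "0 \<le> f x \<and> f x < N" if "0 \<le> x" "x < N" for x
    using that assms unfolding f_def by presburger
  define flip :: "cube \<Rightarrow> cube" where "flip c = (f (fst c), snd c)" for c
  have "inj flip" unfolding flip_def inj_def by (metis f_f prod.collapse prod.inject)
  moreover have "flip ` (box_cubes N \<inter> kappa_z p) \<subseteq> box_cubes N - kappa_z p"
    using f_range f_parity unfolding flip_def box_cubes_def kappa_z_def by auto
  ultimately have "card (box_cubes N \<inter> kappa_z p) \<le> card (box_cubes N - kappa_z p)"
    using finite_box_cubes by (metis card_inj_on_le finite_Diff inj_on_subset subset_UNIV)
  moreover have
    "card (box_cubes N \<inter> kappa_z p) + card (box_cubes N - kappa_z p) = card (box_cubes N)"
    using finite_box_cubes by (rule card_Int_Diff[symmetric])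
  ultimately show ?thesis by linarith
qed

lemma card_inflated_box:
  assumes "even N" and "p \<in> {0,1}"
  shows "2 * card (inflated_box N p) \<le> nat N ^ 3"
proof -
  have "card (inflated_box N p) = card (box_cubes N \<inter> kappa_z p)"
    using inj_on_inflate_z
    by (simp add: inflate_z_box[OF assms(2), symmetric] card_image inj_on_Int)
  then show ?thesis
    using card_box_Int_kappa_z[OF assms(1)]
    by (simp add: box_cubes_def card_cartesian_product power3_eq_cube mult.assoc)
qed

lemma x_line_inflated_box:
  fixes N p v w :: int
  defines "m \<equiv> min (N - 1 - v - p) v"
  shows "x_line (inflated_box N p) (v,w)
    = (if 0 \<le> w \<and> w < N then (\<lambda>u. (u,v,w)) ` {-m-p..m} else {})"
  by (auto simp: x_line_def inflated_box_def m_def)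

lemma card_x_line_inflated_box:
  fixes N p v w :: int
  defines "m \<equiv> min (N - 1 - v - p) v"
  shows "card (x_line (inflated_box N p) (v,w))
    = (if 0 \<le> w \<and> w < N then nat (2 * m + p + 1) else 0)"
  unfolding x_line_inflated_box m_def by (simp add: card_image inj_on_def)

lemma card_x_line_inflated_box_le: "card (x_line (inflated_box N p) r) \<le> nat N"
  by (cases r) (auto simp: card_x_line_inflated_box min_def intro!: nat_mono)

lemma even_card_x_line_inflated_box:
  assumes "r \<in> snd ` inflated_box N p" and "p \<in> {0,1}"
  shows "even (card (x_line (inflated_box N p) r)) \<longleftrightarrow> p = 1"
proof -
  obtain v w where r: "r = (v,w)" by fastforce
  have "x_line (inflated_box N p) r \<noteq> {}"
    using assms(1) by (auto simp: x_line_def)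
  moreover have "finite (x_line (inflated_box N p) r)"
    using finite_inflated_box[OF assms(2)] by (simp add: x_line_def)
  ultimately have "0 < card (x_line (inflated_box N p) r)" by (simp add: card_gt_0_iff)
  then show ?thesis
    using assms(2) by (auto simp: r card_x_line_inflated_box even_nat_iff split: if_splits)
qed

lemma card_x_line_inflated_box_2_0: "card (x_line (inflated_box 2 0) r) \<le> 1"
proof -
  obtain v w where r: "r = (v,w)" by fastforce
  have "min (1 - v) v \<le> 0" by (simp add: min_def)
  then show ?thesis by (simp add: r card_x_line_inflated_box nat_le_iff)
qed

lemma inflated_box_2_1_no_y_neighbours:
  "(x,y,z) \<in> inflated_box 2 1 \<Longrightarrow> (x,y+1,z) \<notin> inflated_box 2 1"
  by (simp add: inflated_box_def) presburger

definition half_integers :: "int \<Rightarrow> real set" where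
  "half_integers m = (\<lambda>j. of_int j / 2) ` {-m..m}"

lemma card_half_integers_le: "card (half_integers m) \<le> nat (2 * m + 1)"
  using card_image_le[of "{-m..m}" "\<lambda>j. of_int j / 2 :: real"] by (simp add: half_integers_def)

lemma Tw_kappa_box_mem_half_integers:
  assumes T: "slab_tiling (box_cubes N) T" and N: "even N" "0 \<le> N" and p: "p \<in> {0,1}"
  shows "Tw_kappa a p T \<in> half_integers (N ^ 4 div 16)"
proof -
  interpret domino_tiling "inflated_box N p" "transform a p T"
    using T p by (rule domino_tiling_inflated_box)
  let ?A = "aligned_pairs (transform a p T)"
  obtain k where k: "twist (transform a p T) = of_int k / 4" "\<bar>k\<bar> \<le> int (card ?A)"
    "even (k + int (card ?A))"
    using twist_eq_quarter_int card_affecting_pairs by metis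
  have "even (card ?A)"
    using even_card_x_line_inflated_box[OF _ p] by (rule even_card_aligned_pairs)
  with k(3) obtain j where j: "k = 2 * j" by (metis even_add even_of_nat evenE)
  have "8 * card ?A \<le> nat N * (2 * card (inflated_box N p))"
    using four_card_aligned_pairs_le[OF card_x_line_inflated_box_le] by simp
  also have "\<dots> \<le> nat N * nat N ^ 3"
    using card_inflated_box[OF N(1) p] by (rule mult_le_mono2)
  also have "\<dots> = nat N ^ 4" by (simp add: power_eq_if)
  finally have "int (8 * card ?A) \<le> int (nat N ^ 4)" by (simp only: of_nat_le_iff)
  then have "16 * \<bar>j\<bar> \<le> N ^ 4" using k(2) j N(2) by (simp add: abs_mult)
  then have "j \<in> {-(N ^ 4 div 16)..N ^ 4 div 16}" by (simp add: abs_le_iff; linarith)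
  moreover have "Tw_kappa a p T = of_int j / 2" using k(1) j by (simp add: Tw_kappa_def)
  ultimately show ?thesis unfolding half_integers_def by simp
qed

lemma Tw_kappa_box_2_eq_0:
  assumes "slab_tiling (box_cubes 2) T" and p: "p \<in> {0,1}"
  shows "Tw_kappa a p T = 0"
proof -
  interpret domino_tiling "inflated_box 2 p" "transform a p T"
    using assms by (rule domino_tiling_inflated_box)
  have "aligned_pairs (transform a p T) = {}"
  proof (cases "p = 0")
    case True
    then show ?thesis
      using card_x_line_inflated_box_2_0 by (intro aligned_pairs_empty_if_x_lines_le_1) simp
  next
    case False
    with p have "p = 1" by simp
    then show ?thesis
      using inflated_box_2_1_no_y_neighbours by (intro aligned_pairs_empty_if_no_y_neighbours) simp
  qed
  then show ?thesis unfolding Tw_kappa_def by (rule twist_eq_0_if_no_aligned_pairs)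
qed

lemma TTw_set_box_subset:
  assumes "even N" "0 \<le> N" "px \<in> {0,1}" "py \<in> {0,1}" "pz \<in> {0,1}"
  defines "H \<equiv> half_integers (N ^ 4 div 16)"
  shows "TTw_set px py pz (box_cubes N) \<subseteq> H \<times> H \<times> H"
  using Tw_kappa_box_mem_half_integers assms by (auto simp: TTw_set_def TTw_def)

lemma TTw_set_box_2:
  assumes "px \<in> {0,1}" "py \<in> {0,1}" "pz \<in> {0,1}"
  shows "TTw_set px py pz (box_cubes 2) \<subseteq> {(0,0,0)}"
  using Tw_kappa_box_2_eq_0 assms by (auto simp: TTw_set_def TTw_def)

lemma half_integer_count_cubed_le:
  fixes N :: int
  assumes "4 \<le> N"
  shows "real (nat (2 * (N ^ 4 div 16) + 1) ^ 3) \<le> 1 / 2^8 * real_of_int N ^ 12"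
proof -
  define t where "t = real_of_int N ^ 4"
  have t_ge: "4 ^ 4 \<le> t" unfolding t_def using assms by (intro power_mono) auto
  have "16 * (x div 16) \<le> x" for x :: int by presburger
  then have "16 * real_of_int (N ^ 4 div 16) \<le> t"
    unfolding t_def by (metis of_int_le_iff of_int_mult of_int_numeral of_int_power)
  with t_ge have "2 * real_of_int (N ^ 4 div 16) + 1 \<le> 33 / 256 * t" by simp
  moreover have "0 \<le> N ^ 4 div 16" by (simp add: pos_imp_zdiv_nonneg_iff)
  ultimately have "real (nat (2 * (N ^ 4 div 16) + 1) ^ 3) \<le> (33 / 256 * t) ^ 3"
    by (simp add: power_mono)
  also have "\<dots> = 35937 / 16777216 * t ^ 3" by (simp add: power_mult_distrib power_divide)
  also have "\<dots> \<le> 1 / 2^8 * t ^ 3" using t_ge by (intro mult_right_mono) auto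
  finally show ?thesis by (simp add: t_def flip: power_mult)
qed

theorem lemma5p3:
  fixes N px py pz :: int
  assumes "even N" and "N \<ge> 2"
    and "px \<in> {0,1}" and "py \<in> {0,1}" and "pz \<in> {0,1}"
  shows "real (card (TTw_set px py pz (box_cubes N))) \<le> (1 / 2^8) * real_of_int N ^ 12"
proof (cases "N = 2")
  case True
  then have "card (TTw_set px py pz (box_cubes N)) \<le> card {(0::real, 0::real, 0::real)}"
    using TTw_set_box_2 assms(3-5) by (intro card_mono) auto
  with True show ?thesis by simp
next
  case False
  with assms(1,2) have "4 \<le> N" by presburger
  let ?H = "half_integers (N ^ 4 div 16)"
  have "card (TTw_set px py pz (box_cubes N)) \<le> card (?H \<times> ?H \<times> ?H)"
    using TTw_set_box_subset assms by (intro card_mono) (auto simp: half_integers_def)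
  also have "\<dots> = card ?H ^ 3" by (simp add: card_cartesian_product power3_eq_cube)
  also have "\<dots> \<le> nat (2 * (N ^ 4 div 16) + 1) ^ 3"
    using card_half_integers_le by (rule power_mono) simp
  finally have "real (card (TTw_set px py pz (box_cubes N)))
      \<le> real (nat (2 * (N ^ 4 div 16) + 1) ^ 3)" by (simp only: of_nat_le_iff)
  also have "\<dots> \<le> 1 / 2^8 * real_of_int N ^ 12"
    using \<open>4 \<le> N\<close> by (rule half_integer_count_cubed_le)
  finally show ?thesis .
qed

end
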